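(* Let $H$ be a nonlocal vertex bialgebra and let $V$ be a nonlocal vertex $H$-module-algebra. Then for all $h,h'\in H$ and $v\in V$, $$Y(h,z+x)Y(h',z)v=Y(Y(h,x)h',z)v,$$ where $Y(h,z+x)$ is expanded in nonnegative powers of $x$.
   Context: All vector spaces are over $\mathbb{C}$. A nonlocal vertex algebra is a vector space $V$ with a linear map $Y(\cdot,x):V\to \mathrm{Hom}(V,V((x)))$, $v\mapsto Y(v,x)=\sum_{n\in\mathbb Z}v_nx^{-n-1}$, and a vector $\mathbf 1\in V$ such that for all $v$: $Y(\mathbf 1,x)v=v$, $Y(v,x)\mathbf 1\in V[[x]]$, $\lim_{x\to0}Y(v,x)\mathbf 1=v$; and for all $u,v,w$ there is $k\ge0$ with $(x_0+x_2)^kY(u,x_0+x_2)Y(v,x_2)w=(x_0+x_2)^kY(Y(u,x_0)v,x_2)w$. A module over a nonlocal vertex algebra $H$ is a vector space $W$ with a linear map $Y_W(\cdot,x):H\to\mathrm{Hom}(W,W((x)))$ such that $Y_W(\mathbf 1,x)=1_W$ and for $a,b\in H$, $w\in W$ there is $l\ge0$ with $(x_0+x_2)^lY_W(a,x_0+x_2)Y_W(b,x_2)w=(x_0+x_2)^lY_W(Y(a,x_0)b,x_2)w$. Binomial expressions $f(x_1\pm x_2)$ are expanded in nonnegative powers of the second variable. A nonlocal vertex bialgebra is a nonlocal vertex algebra $H$ with a coalgebra structure $(\Delta,\varepsilon)$ such that $\Delta:H\to H\otimes H$ and $\varepsilon:H\to\mathbb C$ are homomorphisms of nonlocal vertex algebras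 ($H\otimes H$ with the tensor product structure $Y(a\otimes b,x)(a'\otimes b')=Y(a,x)a'\otimes Y(b,x)b'$, $\mathbb C$ with $Y(1,x)=1$): $\varepsilon(\mathbf 1)=1$, $\varepsilon(Y(h,x)h')=\varepsilon(h)\varepsilon(h')$, $\Delta(\mathbf 1)=\mathbf 1\otimes\mathbf 1$, $\Delta(Y(h,x)h')=Y(\Delta(h),x)\Delta(h')$. Write $\Delta(h)=\sum h^{(1)}\otimes h^{(2)}$. A nonlocal vertex $H$-module-algebra is a nonlocal vertex algebra $V$ with an $H$-module structure (vertex operators denoted $Y(h,x)$) such that for $h\in H$, $u,v\in V$: $Y(h,x)v\in V\otimes\mathbb C((x))$ (a finite sum $\sum_i v_i f_i(x)$), $Y(h,x)\mathbf 1=\varepsilon(h)\mathbf 1$, and $Y(h,x)Y(u,z)v=\sum Y(Y(h^{(1)},x-z)u,z)Y(h^{(2)},x)v$. *)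

theory Defs
  imports Complex_Main "HOL-Library.Groups_Big_Fun"
begin

text \<open>A vector space over the complex numbers is a type 'a :: ab_group_add together with a scalar
  multiplication s :: complex => 'a => 'a satisfying Vector_Spaces.vector_space s.
  A vertex operator Y(a,x) = sum_n a_n x^(-n-1) is encoded by its modes: Y a n b = a_n b.
  A two-variable series is encoded by its coefficient function F p q (coefficient of
  x0^p x2^q, or x^p z^q).
  Elements of tensor products H (x) H (resp. H (x) H (x) H) are represented by finite lists of
  pairs (resp. triples); two such tensors are equal iff they agree under all pairings
  with products of linear functionals H -> C.\<close>

definition lin_fun :: "(complex \<Rightarrow> 'a::ab_group_add \<Rightarrow> 'a) \<Rightarrow> ('a \<Rightarrow> complex) \<Rightarrow> bool" where
  "lin_fun s f \<longleftrightarrow> Vector_Spaces.linear s ((*) :: complex \<Rightarrow> complex \<Rightarrow> complex) f"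

definition pair2 :: "('a \<Rightarrow> complex) \<Rightarrow> ('a \<Rightarrow> complex) \<Rightarrow> ('a \<times> 'a) list \<Rightarrow> complex" where
  "pair2 f g xs = (\<Sum>(a, b)\<leftarrow>xs. f a * g b)"

definition truncated :: "('a \<Rightarrow> int \<Rightarrow> 'w::zero \<Rightarrow> 'w) \<Rightarrow> bool" where
  "truncated Y \<longleftrightarrow> (\<forall>a w. \<exists>N. \<forall>n\<ge>N. Y a n w = 0)"

definition bilinear_modes ::
  "(complex \<Rightarrow> 'a::ab_group_add \<Rightarrow> 'a) \<Rightarrow> (complex \<Rightarrow> 'w::ab_group_add \<Rightarrow> 'w)
     \<Rightarrow> ('a \<Rightarrow> int \<Rightarrow> 'w \<Rightarrow> 'w) \<Rightarrow> bool" where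
  "bilinear_modes sA sW Y \<longleftrightarrow>
     (\<forall>n w. Vector_Spaces.linear sA sW (\<lambda>a. Y a n w)) \<and>
     (\<forall>n a. Vector_Spaces.linear sW sW (\<lambda>w. Y a n w))"

text \<open>Coefficient of x0^p x2^q in Y_W(u,x0+x2) Y_W(v,x2) w, where
  (x0+x2)^(-n-1) is expanded in nonnegative powers of x2: the term with x2^i of
  (x0+x2)^(-n-1) contributes to x0^p exactly when n = -p-1-i, with binomial (p+i choose i).\<close>
definition prod_coeff ::
  "(complex \<Rightarrow> 'w::ab_group_add \<Rightarrow> 'w) \<Rightarrow> ('a \<Rightarrow> int \<Rightarrow> 'w \<Rightarrow> 'w) \<Rightarrow> 'a \<Rightarrow> 'a \<Rightarrow> 'w
     \<Rightarrow> int \<Rightarrow> int \<Rightarrow> 'w" where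
  "prod_coeff s YW u v w p q =
     Sum_any (\<lambda>i::nat. s ((of_int (- (- p - 1 - int i) - 1) :: complex) gchoose i)
                         (YW u (- p - 1 - int i) (YW v (int i - q - 1) w)))"

text \<open>Coefficient of x0^p x2^q in Y_W(Y(u,x0)v, x2) w.\<close>
definition iter_coeff ::
  "('a \<Rightarrow> int \<Rightarrow> 'a \<Rightarrow> 'a) \<Rightarrow> ('a \<Rightarrow> int \<Rightarrow> 'w \<Rightarrow> 'w) \<Rightarrow> 'a \<Rightarrow> 'a \<Rightarrow> 'w
     \<Rightarrow> int \<Rightarrow> int \<Rightarrow> 'w" where
  "iter_coeff Y YW u v w p q = YW (Y u (- p - 1) v) (- q - 1) w"

text \<open>Multiplication of a two-variable series (coefficients F p q of x0^p x2^q) by the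
  polynomial (x0+x2)^k.\<close>
definition polymul ::
  "(complex \<Rightarrow> 'w::ab_group_add \<Rightarrow> 'w) \<Rightarrow> nat \<Rightarrow> (int \<Rightarrow> int \<Rightarrow> 'w) \<Rightarrow> int \<Rightarrow> int \<Rightarrow> 'w" where
  "polymul s k F p q = (\<Sum>j\<in>{0..k}. s (of_nat (k choose j)) (F (p - int (k - j)) (q - int j)))"

definition weak_assoc ::
  "(complex \<Rightarrow> 'w::ab_group_add \<Rightarrow> 'w) \<Rightarrow> ('a \<Rightarrow> int \<Rightarrow> 'a \<Rightarrow> 'a)
     \<Rightarrow> ('a \<Rightarrow> int \<Rightarrow> 'w \<Rightarrow> 'w) \<Rightarrow> bool" where
  "weak_assoc s Y YW \<longleftrightarrow>
     (\<forall>u v w. \<exists>k::nat. \<forall>p q.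
        polymul s k (prod_coeff s YW u v w) p q = polymul s k (iter_coeff Y YW u v w) p q)"

definition nonlocal_va ::
  "(complex \<Rightarrow> 'a::ab_group_add \<Rightarrow> 'a) \<Rightarrow> ('a \<Rightarrow> int \<Rightarrow> 'a \<Rightarrow> 'a) \<Rightarrow> 'a \<Rightarrow> bool" where
  "nonlocal_va s Y one \<longleftrightarrow>
     Vector_Spaces.vector_space s \<and>
     bilinear_modes s s Y \<and>
     truncated Y \<and>
     (\<forall>v n. Y one n v = (if n = -1 then v else 0)) \<and>
     (\<forall>v n. n \<ge> 0 \<longrightarrow> Y v n one = 0) \<and>
     (\<forall>v. Y v (-1) one = v) \<and>
     weak_assoc s Y Y"

definition nonlocal_va_module ::
  "(complex \<Rightarrow> 'a::ab_group_add \<Rightarrow> 'a) \<Rightarrow> ('a \<Rightarrow> int \<Rightarrow> 'a \<Rightarrow> 'a) \<Rightarrow> 'a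
     \<Rightarrow> (complex \<Rightarrow> 'w::ab_group_add \<Rightarrow> 'w) \<Rightarrow> ('a \<Rightarrow> int \<Rightarrow> 'w \<Rightarrow> 'w) \<Rightarrow> bool" where
  "nonlocal_va_module sA Y one sW YW \<longleftrightarrow>
     Vector_Spaces.vector_space sW \<and>
     bilinear_modes sA sW YW \<and>
     truncated YW \<and>
     (\<forall>w n. YW one n w = (if n = -1 then w else 0)) \<and>
     weak_assoc sW Y YW"

definition coalgebra ::
  "(complex \<Rightarrow> 'h::ab_group_add \<Rightarrow> 'h) \<Rightarrow> ('h \<Rightarrow> ('h \<times> 'h) list) \<Rightarrow> ('h \<Rightarrow> complex) \<Rightarrow> bool" where
  "coalgebra s Delta eps \<longleftrightarrow>
     lin_fun s eps \<and>
     (\<forall>f g. lin_fun s f \<longrightarrow> lin_fun s g \<longrightarrow> lin_fun s (\<lambda>h. pair2 f g (Delta h))) \<and>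
     (\<forall>f g k h. lin_fun s f \<longrightarrow> lin_fun s g \<longrightarrow> lin_fun s k \<longrightarrow>
        (\<Sum>(a, b)\<leftarrow>Delta h. pair2 f g (Delta a) * k b) =
        (\<Sum>(a, b)\<leftarrow>Delta h. f a * pair2 g k (Delta b))) \<and>
     (\<forall>h. (\<Sum>(a, b)\<leftarrow>Delta h. s (eps a) b) = h) \<and>
     (\<forall>h. (\<Sum>(a, b)\<leftarrow>Delta h. s (eps b) a) = h)"

definition nonlocal_vertex_bialgebra ::
  "(complex \<Rightarrow> 'h::ab_group_add \<Rightarrow> 'h) \<Rightarrow> ('h \<Rightarrow> int \<Rightarrow> 'h \<Rightarrow> 'h) \<Rightarrow> 'h
     \<Rightarrow> ('h \<Rightarrow> ('h \<times> 'h) list) \<Rightarrow> ('h \<Rightarrow> complex) \<Rightarrow> bool" where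
  "nonlocal_vertex_bialgebra s Y one Delta eps \<longleftrightarrow>
     nonlocal_va s Y one \<and>
     coalgebra s Delta eps \<and>
     eps one = 1 \<and>
     (\<forall>h h' n. eps (Y h n h') = (if n = -1 then eps h * eps h' else 0)) \<and>
     (\<forall>f g. lin_fun s f \<longrightarrow> lin_fun s g \<longrightarrow> pair2 f g (Delta one) = f one * g one) \<and>
     (\<forall>f g h h' n. lin_fun s f \<longrightarrow> lin_fun s g \<longrightarrow>
        pair2 f g (Delta (Y h n h')) =
        (\<Sum>(a, b)\<leftarrow>Delta h. \<Sum>(a', b')\<leftarrow>Delta h'.
            Sum_any (\<lambda>p::int. f (Y a p a') * g (Y b (n - 1 - p) b'))))"

text \<open>Coefficient of x^p z^q in Y(Y(h1,x-z)u, z) Y(h2,x) v (for a single pair h1, h2), with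
  (x-z)^(-n-1) expanded in nonnegative powers of z: the z^i term
  (-1)^i (-n-1 choose i) x^(-n-1-i) z^i; then the mode of Y(.,z) is i-q-1 and the mode of
  Y(h2,x) is -n-i-p-2.\<close>
definition ma_rhs_coeff ::
  "(complex \<Rightarrow> 'v::ab_group_add \<Rightarrow> 'v) \<Rightarrow> ('v \<Rightarrow> int \<Rightarrow> 'v \<Rightarrow> 'v) \<Rightarrow> ('h \<Rightarrow> int \<Rightarrow> 'v \<Rightarrow> 'v)
     \<Rightarrow> 'h \<Rightarrow> 'h \<Rightarrow> 'v \<Rightarrow> 'v \<Rightarrow> int \<Rightarrow> int \<Rightarrow> 'v" where
  "ma_rhs_coeff sV YV YH h1 h2 u v p q =
     Sum_any (\<lambda>(i::nat, n::int).
        sV ((-1) ^ i * ((of_int (- n - 1) :: complex) gchoose i))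
           (YV (YH h1 n u) (int i - q - 1) (YH h2 (- n - int i - p - 2) v)))"

definition module_algebra ::
  "(complex \<Rightarrow> 'h::ab_group_add \<Rightarrow> 'h) \<Rightarrow> ('h \<Rightarrow> int \<Rightarrow> 'h \<Rightarrow> 'h) \<Rightarrow> 'h
     \<Rightarrow> ('h \<Rightarrow> ('h \<times> 'h) list) \<Rightarrow> ('h \<Rightarrow> complex)
     \<Rightarrow> (complex \<Rightarrow> 'v::ab_group_add \<Rightarrow> 'v) \<Rightarrow> ('v \<Rightarrow> int \<Rightarrow> 'v \<Rightarrow> 'v) \<Rightarrow> 'v
     \<Rightarrow> ('h \<Rightarrow> int \<Rightarrow> 'v \<Rightarrow> 'v) \<Rightarrow> bool" where
  "module_algebra sH YH1 oneH Delta eps sV YV oneV YH \<longleftrightarrow>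
     nonlocal_va sV YV oneV \<and>
     nonlocal_va_module sH YH1 oneH sV YH \<and>
     (\<forall>h v. \<exists>ps :: ('v \<times> (int \<Rightarrow> complex)) list.
        (\<forall>(w, f)\<in>set ps. \<exists>N. \<forall>k<N. f k = 0) \<and>
        (\<forall>n. YH h n v = (\<Sum>(w, f)\<leftarrow>ps. sV (f (- n - 1)) w))) \<and>
     (\<forall>h n. YH h n oneV = (if n = -1 then sV (eps h) oneV else 0)) \<and>
     (\<forall>h u v p q. YH h (- p - 1) (YV u (- q - 1) v) =
        (\<Sum>(h1, h2)\<leftarrow>Delta h. ma_rhs_coeff sV YV YH h1 h2 u v p q))"

text \<open>Coefficient of x^p z^q in Y(h,z+x) Y(h',z) v, with (z+x)^(-n-1) expanded in
  nonnegative powers of x (zero for p < 0).\<close>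
definition shifted_prod_term ::
  "(complex \<Rightarrow> 'v::ab_group_add \<Rightarrow> 'v) \<Rightarrow> ('h \<Rightarrow> int \<Rightarrow> 'v \<Rightarrow> 'v) \<Rightarrow> 'h \<Rightarrow> 'h \<Rightarrow> 'v
     \<Rightarrow> int \<Rightarrow> int \<Rightarrow> int \<Rightarrow> 'v" where
  "shifted_prod_term sV YH h h' v p q n =
     (if p < 0 then 0
      else sV ((of_int (- n - 1) :: complex) gchoose (nat p)) (YH h n (YH h' (- n - p - q - 2) v)))"

definition shifted_prod_coeff ::
  "(complex \<Rightarrow> 'v::ab_group_add \<Rightarrow> 'v) \<Rightarrow> ('h \<Rightarrow> int \<Rightarrow> 'v \<Rightarrow> 'v) \<Rightarrow> 'h \<Rightarrow> 'h \<Rightarrow> 'v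
     \<Rightarrow> int \<Rightarrow> int \<Rightarrow> 'v" where
  "shifted_prod_coeff sV YH h h' v p q = Sum_any (shifted_prod_term sV YH h h' v p q)"

end

theory Submission
  imports Defs "HOL-Computational_Algebra.Formal_Power_Series"
begin

text \<open>Write \<open>c(n,m) = h_n h'_m v\<close>. The coefficients of \<open>Y(h,z+x)Y(h',z)v\<close> and of
  \<open>Y(h,x0+x2)Y(h',x2)v\<close> are the same combinations of the \<open>c(n,m)\<close>, except that
  \<open>(x0+x2)^(-n-1)\<close> is expanded in nonnegative powers of \<open>x0\<close> in the first and of \<open>x2\<close> in the second.
  Because \<open>Y(h',x)v\<close> is a finite sum of vectors times Laurent series, only modes \<open>n < M\<close> of \<open>h\<close>
  contribute, uniformly in \<open>m\<close>; after multiplication by \<open>(x0+x2)^K\<close> with \<open>K \<ge> M\<close> both expansions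
  become the polynomial \<open>(x0+x2)^(K-n-1)\<close>. Hence, by weak associativity of the \<open>H\<close>-module \<open>V\<close>,
  \<open>(x0+x2)^K Y(h,z+x)Y(h',z)v = (x0+x2)^K Y(Y(h,x)h',z)v\<close>, and \<open>(x0+x2)^K\<close> can be cancelled
  since both series are truncated from below in \<open>x\<close>.\<close>

lemma polymul_Suc:
  assumes "vector_space s"
  shows "polymul s (Suc k) F p q = polymul s k F (p-1) q + polymul s k F p (q-1)"
proof -
  interpret V: vector_space s by fact
  have pascal: "polymul s (Suc k) F p q =
     (\<Sum>j\<le>Suc k. s (of_nat (k choose j)) (F (p - int (Suc k - j)) (q - int j))) +
     (\<Sum>j\<le>Suc k. s (if j = 0 then 0 else of_nat (k choose (j - 1))) (F (p - int (Suc k - j)) (q - int j)))"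
    unfolding polymul_def atLeast0AtMost sum.distrib[symmetric]
  proof (rule sum.cong[OF refl])
    fix j assume "j \<in> {..Suc k}"
    show "s (of_nat (Suc k choose j)) (F (p - int (Suc k - j)) (q - int j)) =
      s (of_nat (k choose j)) (F (p - int (Suc k - j)) (q - int j)) +
      s (if j = 0 then 0 else of_nat (k choose (j - 1))) (F (p - int (Suc k - j)) (q - int j))"
      by (cases j) (auto simp: V.scale_left_distrib[symmetric] add.commute)
  qed
  have shift_x0: "(\<Sum>j\<le>Suc k. s (of_nat (k choose j)) (F (p - int (Suc k - j)) (q - int j))) = polymul s k F (p-1) q"
    unfolding polymul_def atLeast0AtMost sum.atMost_Suc
    by (auto intro!: sum.cong simp: of_nat_diff binomial_eq_0 algebra_simps)
  have shift_x2: "(\<Sum>j\<le>Suc k. s (if j = 0 then 0 else of_nat (k choose (j - 1))) (F (p - int (Suc k - j)) (q - int j))) = polymul s k F p (q-1)"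
    unfolding polymul_def atLeast0AtMost sum.atMost_Suc_shift
    by (auto intro!: sum.cong simp: algebra_simps)
  show ?thesis using pascal shift_x0 shift_x2 by simp
qed

lemma polymul_eq_add:
  assumes V: "vector_space s" and "\<forall>p q. polymul s k F p q = polymul s k G p q"
  shows "\<forall>p q. polymul s (k + d) F p q = polymul s (k + d) G p q"
  by (induction d) (use assms in \<open>auto simp: polymul_Suc[OF V]\<close>)

lemma polymul_cancel:
  assumes "vector_space s" and E: "\<forall>p q. polymul s k F p q = polymul s k G p q"
    and Z: "\<forall>p q. p < p0 \<longrightarrow> F p q = G p q"
  shows "F p q = G p q"
proof -
  interpret V: vector_space s by fact
  txt \<open>In \<open>polymul s k F p (q + k)\<close> the coefficient \<open>F p q\<close> occurs with factor 1, all
    other coefficients have smaller first index; so agreement propagates upwards in \<open>p\<close>.\<close>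
  have "\<forall>p q. p < p0 + int d \<longrightarrow> F p q = G p q" for d
  proof (induction d)
    case 0 then show ?case using Z by simp
  next
    case (Suc d)
    show ?case
    proof (intro allI impI)
      fix p q assume pl: "p < p0 + int (Suc d)"
      show "F p q = G p q"
      proof (cases "p < p0 + int d")
        case True then show ?thesis using Suc by blast
      next
        case False
        have eqs: "(\<Sum>j<k. s (of_nat (k choose j)) (F (p - int (k - j)) (q + int k - int j))) =
                   (\<Sum>j<k. s (of_nat (k choose j)) (G (p - int (k - j)) (q + int k - int j)))"
          using Suc pl False by (intro sum.cong refl) auto
        have "polymul s k F p (q + int k) = polymul s k G p (q + int k)" using E by blast
        then have "(\<Sum>j<k. s (of_nat (k choose j)) (F (p - int (k - j)) (q + int k - int j))) + F p q =
                   (\<Sum>j<k. s (of_nat (k choose j)) (G (p - int (k - j)) (q + int k - int j))) + G p q"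
          unfolding polymul_def atLeast0AtMost lessThan_Suc_atMost[symmetric] sum.lessThan_Suc
          by simp
        then show ?thesis using eqs by simp
      qed
    qed
  qed
  from this[rule_format, of p "nat (p - p0 + 1)"] show ?thesis by simp
qed

lemma gbinomial_Vandermonde_int:
  fixes a :: complex
  shows "(\<Sum>i\<in>{0..K}. of_nat (K choose i) * (if int i \<le> t then a gchoose nat (t - int i) else 0))
       = (if 0 \<le> t then (of_nat K + a) gchoose nat t else 0)"
proof (cases "0 \<le> t")
  case False
  then show ?thesis by (auto intro!: sum.neutral)
next
  case True
  then obtain T where t: "t = int T" by (metis nonneg_int_cases)
  have "(\<Sum>i\<in>{0..K}. of_nat (K choose i) * (if int i \<le> t then a gchoose nat (t - int i) else 0))
      = (\<Sum>i\<in>{0..K+T}. of_nat (K choose i) * (if i \<le> T then a gchoose (T - i) else 0))"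
    by (rule sum.mono_neutral_cong_left) (auto simp: t binomial_eq_0 nat_diff_distrib)
  also have "\<dots> = (\<Sum>i\<in>{0..T}. (of_nat K gchoose i) * (a gchoose (T - i)))"
    by (rule sum.mono_neutral_cong_right) (auto simp: binomial_gbinomial)
  also have "\<dots> = (of_nat K + a) gchoose T"
    by (rule gbinomial_Vandermonde)
  finally show ?thesis by (simp add: t)
qed

lemma sum_binomial_reflect:
  fixes f :: "nat \<Rightarrow> 'a::comm_semiring_1"
  shows "(\<Sum>j\<in>{0..K}. of_nat (K choose j) * f (K - j)) = (\<Sum>i\<in>{0..K}. of_nat (K choose i) * f i)"
proof -
  have "(\<Sum>j\<in>{0..K}. of_nat (K choose j) * f (K - j)) = (\<Sum>j\<in>{0..K}. of_nat (K choose (K - j)) * f (K - j))"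
    by (intro sum.cong refl) (simp add: binomial_symmetric[symmetric])
  then show ?thesis
    using sum.atLeastAtMost_rev[of "\<lambda>i. of_nat (K choose i) * f i" 0 K] by simp
qed

text \<open>Coefficient of \<open>x0^p\<close> in \<open>(x0+x2)^e\<close>, expanded in nonnegative powers of \<open>x0\<close>, resp. of \<open>x2\<close>.\<close>

definition expansion_in_x0 :: "int \<Rightarrow> int \<Rightarrow> complex" where
  "expansion_in_x0 e p = (if p < 0 then 0 else of_int e gchoose nat p)"

definition expansion_in_x2 :: "int \<Rightarrow> int \<Rightarrow> complex" where
  "expansion_in_x2 e p = (if p \<le> e then of_int e gchoose nat (e - p) else 0)"

lemma binomial_times_expansion_in_x0:
  "(\<Sum>j\<in>{0..K}. of_nat (K choose j) * expansion_in_x0 e (p - int (K - j)))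
     = expansion_in_x0 (int K + e) p"
proof -
  have "(\<Sum>j\<in>{0..K}. of_nat (K choose j) * expansion_in_x0 e (p - int (K - j)))
      = (\<Sum>i\<in>{0..K}. of_nat (K choose i) * expansion_in_x0 e (p - int i))"
    by (rule sum_binomial_reflect[where f = "\<lambda>i. expansion_in_x0 e (p - int i)"])
  also have "\<dots> = (\<Sum>i\<in>{0..K}. of_nat (K choose i) *
                     (if int i \<le> p then of_int e gchoose nat (p - int i) else 0))"
    by (intro sum.cong refl) (auto simp: expansion_in_x0_def)
  also have "\<dots> = expansion_in_x0 (int K + e) p"
    by (simp add: gbinomial_Vandermonde_int expansion_in_x0_def)
  finally show ?thesis .
qed

lemma binomial_times_expansion_in_x2:
  "(\<Sum>j\<in>{0..K}. of_nat (K choose j) * expansion_in_x2 e (p - int (K - j)))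
     = expansion_in_x2 (int K + e) p"
proof -
  have "(\<Sum>j\<in>{0..K}. of_nat (K choose j) * expansion_in_x2 e (p - int (K - j)))
      = (\<Sum>j\<in>{0..K}. of_nat (K choose j) * (if int j \<le> int K + e - p
                        then of_int e gchoose nat (int K + e - p - int j) else 0))"
    by (intro sum.cong refl) (auto simp: expansion_in_x2_def of_nat_diff algebra_simps)
  also have "\<dots> = expansion_in_x2 (int K + e) p"
    by (simp add: gbinomial_Vandermonde_int expansion_in_x2_def)
  finally show ?thesis .
qed

lemma expansion_in_x0_eq_x2:
  assumes "0 \<le> e"
  shows "expansion_in_x0 e p = expansion_in_x2 e p"
proof -
  obtain E where e: "e = int E" using assms by (metis nonneg_int_cases)
  have vanish: "(of_int e :: complex) gchoose k = 0" if "E < k" for k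
    using that by (simp add: e binomial_gbinomial[symmetric] binomial_eq_0)
  consider "p < 0" | "0 \<le> p" "p \<le> e" | "e < p" by linarith
  then show ?thesis
  proof cases
    case 1
    then have "E < nat (e - p)" by (simp add: e)
    with 1 show ?thesis by (simp add: expansion_in_x0_def expansion_in_x2_def vanish)
  next
    case 2
    then have "nat p \<le> E" "nat (e - p) = E - nat p" by (simp_all add: e nat_diff_distrib)
    then show ?thesis
      using 2 gbinomial_of_nat_symmetric[of "nat p" E, where 'a = complex]
      by (simp add: expansion_in_x0_def expansion_in_x2_def e)
  next
    case 3
    then have "E < nat p" by (simp add: e)
    with 3 show ?thesis by (simp add: expansion_in_x0_def expansion_in_x2_def vanish)
  qed
qed

lemma Sum_any_reindex_inj:
  fixes g :: "'a \<Rightarrow> 'b::comm_monoid_add"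
  assumes "inj \<phi>" and "{a. g a \<noteq> 0} \<subseteq> range \<phi>"
  shows "Sum_any (\<lambda>i. g (\<phi> i)) = Sum_any g"
proof -
  have "{a. g a \<noteq> 0} = \<phi> ` {i. g (\<phi> i) \<noteq> 0}"
    using assms(2) by auto
  then show ?thesis
    using sum.reindex[of \<phi> "{i. g (\<phi> i) \<noteq> 0}" g] assms(1)
    by (simp add: Sum_any.expand_set inj_on_def comp_def)
qed

lemma shifted_prod_coeff_eq_Sum_any:
  assumes "vector_space sV"
  shows "shifted_prod_coeff sV YW h h' v p q =
    Sum_any (\<lambda>n. sV (expansion_in_x0 (- n - 1) p) (YW h n (YW h' (- n - p - q - 2) v)))"
proof -
  interpret V: vector_space sV by fact
  show ?thesis
    unfolding shifted_prod_coeff_def shifted_prod_term_def expansion_in_x0_def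
    by (intro Sum_any.cong) simp
qed

lemma prod_coeff_eq_Sum_any:
  assumes "vector_space sV"
  shows "prod_coeff sV YW h h' v p q =
    Sum_any (\<lambda>n. sV (expansion_in_x2 (- n - 1) p) (YW h n (YW h' (- n - p - q - 2) v)))"
    (is "_ = Sum_any ?g")
proof -
  interpret V: vector_space sV by fact
  have "prod_coeff sV YW h h' v p q = Sum_any (\<lambda>i::nat. ?g (- p - 1 - int i))"
    unfolding prod_coeff_def expansion_in_x2_def by (intro Sum_any.cong) (simp add: algebra_simps)
  also have "\<dots> = Sum_any ?g"
  proof (rule Sum_any_reindex_inj)
    show "inj (\<lambda>i::nat. - p - 1 - int i)"
      by (simp add: inj_def)
    show "{n. ?g n \<noteq> 0} \<subseteq> range (\<lambda>i::nat. - p - 1 - int i)"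
    proof
      fix n assume "n \<in> {n. ?g n \<noteq> 0}"
      then have "n \<le> - p - 1"
        by (auto simp: expansion_in_x2_def split: if_splits)
      then have "n = - p - 1 - int (nat (- p - 1 - n))"
        by simp
      then show "n \<in> range (\<lambda>i::nat. - p - 1 - int i)"
        by blast
    qed
  qed
  finally show ?thesis .
qed

text \<open>On a series whose \<open>(p,q)\<close>-coefficient depends on \<open>q\<close> only through \<open>p+q\<close> (apart from the
  scalars \<open>\<beta>\<close>), multiplication by \<open>(x0+x2)^K\<close> acts on the scalars alone.\<close>

lemma polymul_diagonal_Sum_any:
  assumes "vector_space s" and "finite A"
    and outside: "\<forall>n. n \<notin> A \<longrightarrow> c n (int K - n - p - q - 2) = 0"
  shows "polymul s K (\<lambda>p' q'. Sum_any (\<lambda>n. s (\<beta> n p') (c n (- n - p' - q' - 2)))) p q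
       = (\<Sum>n\<in>A. s (\<Sum>j\<in>{0..K}. of_nat (K choose j) * \<beta> n (p - int (K - j)))
                    (c n (int K - n - p - q - 2)))"
proof -
  interpret V: vector_space s by fact
  have scaled_term: "s (of_nat (K choose j))
      (Sum_any (\<lambda>n. s (\<beta> n (p - int (K - j))) (c n (- n - (p - int (K - j)) - (q - int j) - 2))))
    = (\<Sum>n\<in>A. s (of_nat (K choose j) * \<beta> n (p - int (K - j))) (c n (int K - n - p - q - 2)))"
    if "j \<in> {0..K}" for j
  proof -
    have diagonal: "- n - (p - int (K - j)) - (q - int j) - 2 = int K - n - p - q - 2" for n
      using that by (simp add: of_nat_diff)
    have "Sum_any (\<lambda>n. s (\<beta> n (p - int (K - j))) (c n (int K - n - p - q - 2)))
        = (\<Sum>n\<in>A. s (\<beta> n (p - int (K - j))) (c n (int K - n - p - q - 2)))"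
      by (rule Sum_any.expand_superset) (use assms(2) outside in auto)
    then show ?thesis
      by (simp add: diagonal V.scale_sum_right)
  qed
  have "polymul s K (\<lambda>p' q'. Sum_any (\<lambda>n. s (\<beta> n p') (c n (- n - p' - q' - 2)))) p q
      = (\<Sum>j\<in>{0..K}. \<Sum>n\<in>A. s (of_nat (K choose j) * \<beta> n (p - int (K - j)))
                                  (c n (int K - n - p - q - 2)))"
    unfolding polymul_def by (intro sum.cong refl) (rule scaled_term)
  also have "\<dots> = (\<Sum>n\<in>A. \<Sum>j\<in>{0..K}. s (of_nat (K choose j) * \<beta> n (p - int (K - j)))
                                  (c n (int K - n - p - q - 2)))"
    by (rule sum.swap)
  finally show ?thesis
    by (simp add: V.scale_sum_left)
qed

text \<open>Once \<open>K \<ge> n + 1\<close> for every mode \<open>n\<close> that occurs, \<open>(x0+x2)^K (x0+x2)^(-n-1)\<close> is the same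
  polynomial in both expansions.\<close>

lemma polymul_shifted_prod_coeff_eq_prod_coeff:
  assumes "vector_space sV"
    and vanish: "\<forall>n m. M1 \<le> n \<or> M2 \<le> m \<longrightarrow> YW h n (YW h' m v) = 0"
    and "M1 \<le> int K"
  shows "polymul sV K (shifted_prod_coeff sV YW h h' v) p q = polymul sV K (prod_coeff sV YW h h' v) p q"
proof -
  define A where "A = {int K - p - q - 1 - M2 ..< M1}"
  define c where "c n m = YW h n (YW h' m v)" for n m
  have "finite A"
    by (simp add: A_def)
  have outside: "\<forall>n. n \<notin> A \<longrightarrow> c n (int K - n - p - q - 2) = 0"
    using vanish by (auto simp: A_def c_def)
  have expansions_agree:
    "(\<Sum>j\<in>{0..K}. of_nat (K choose j) * expansion_in_x0 (- n - 1) (p - int (K - j)))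
   = (\<Sum>j\<in>{0..K}. of_nat (K choose j) * expansion_in_x2 (- n - 1) (p - int (K - j)))"
    if "n \<in> A" for n
    unfolding binomial_times_expansion_in_x0 binomial_times_expansion_in_x2
    by (rule expansion_in_x0_eq_x2) (use that assms(3) in \<open>simp add: A_def\<close>)
  have "shifted_prod_coeff sV YW h h' v =
      (\<lambda>p' q'. Sum_any (\<lambda>n. sV (expansion_in_x0 (- n - 1) p') (c n (- n - p' - q' - 2))))"
    by (intro ext) (simp add: shifted_prod_coeff_eq_Sum_any[OF assms(1)] c_def)
  then have "polymul sV K (shifted_prod_coeff sV YW h h' v) p q
      = (\<Sum>n\<in>A. sV (\<Sum>j\<in>{0..K}. of_nat (K choose j) * expansion_in_x0 (- n - 1) (p - int (K - j)))
                    (c n (int K - n - p - q - 2)))"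
    by (simp add: polymul_diagonal_Sum_any[where c = c and K = K and p = p and q = q, OF assms(1) \<open>finite A\<close> outside])
  also have "\<dots> = (\<Sum>n\<in>A. sV (\<Sum>j\<in>{0..K}. of_nat (K choose j) * expansion_in_x2 (- n - 1) (p - int (K - j)))
                    (c n (int K - n - p - q - 2)))"
    by (rule sum.cong[OF refl]) (simp only: expansions_agree)
  also have "prod_coeff sV YW h h' v =
      (\<lambda>p' q'. Sum_any (\<lambda>n. sV (expansion_in_x2 (- n - 1) p') (c n (- n - p' - q' - 2))))"
    by (intro ext) (simp add: prod_coeff_eq_Sum_any[OF assms(1)] c_def)
  then have "(\<Sum>n\<in>A. sV (\<Sum>j\<in>{0..K}. of_nat (K choose j) * expansion_in_x2 (- n - 1) (p - int (K - j)))
                    (c n (int K - n - p - q - 2))) = polymul sV K (prod_coeff sV YW h h' v) p q"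
    by (simp add: polymul_diagonal_Sum_any[where c = c and K = K and p = p and q = q, OF assms(1) \<open>finite A\<close> outside])
  finally show ?thesis .
qed

lemma shifted_prod_coeff_eq_iter_coeff:
  assumes H: "nonlocal_va sH Y oneH" and W: "nonlocal_va_module sH Y oneH sV YW"
    and vanish: "\<forall>n m. M1 \<le> n \<or> M2 \<le> m \<longrightarrow> YW h n (YW h' m v) = 0"
  shows "shifted_prod_coeff sV YW h h' v p q = iter_coeff Y YW h h' v p q"
proof -
  have VS: "vector_space sV" and wa: "weak_assoc sV Y YW" and bil: "bilinear_modes sH sV YW"
    using W unfolding nonlocal_va_module_def by blast+
  obtain k where k: "\<forall>p q. polymul sV k (prod_coeff sV YW h h' v) p q = polymul sV k (iter_coeff Y YW h h' v) p q"
    using wa unfolding weak_assoc_def by blast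
  obtain N where N: "\<forall>n\<ge>N. Y h n h' = 0"
    using H unfolding nonlocal_va_def truncated_def by blast
  define K where "K = k + nat M1"
  have "\<forall>p q. polymul sV K (shifted_prod_coeff sV YW h h' v) p q = polymul sV K (iter_coeff Y YW h h' v) p q"
    using polymul_shifted_prod_coeff_eq_prod_coeff[OF VS vanish, of K] polymul_eq_add[OF VS k, of "nat M1"]
    by (simp add: K_def)
  moreover have "shifted_prod_coeff sV YW h h' v p' q' = iter_coeff Y YW h h' v p' q'"
    if "p' < min 0 (- N)" for p' q'
  proof -
    have "module_hom sH sV (\<lambda>a. YW a (- q' - 1) v)"
      using bil unfolding bilinear_modes_def module_hom_iff_linear by blast
    then have "iter_coeff Y YW h h' v p' q' = 0"
      using N that by (simp add: iter_coeff_def module_hom.zero[OF \<open>module_hom sH sV _\<close>])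
    moreover have "shifted_prod_coeff sV YW h h' v p' q' = 0"
      using that by (simp add: shifted_prod_coeff_def shifted_prod_term_def)
    ultimately show ?thesis by simp
  qed
  ultimately show ?thesis
    by (intro polymul_cancel[OF VS, of K _ _ "min 0 (- N)"]) auto
qed

lemma finite_shifted_prod_term_support:
  assumes "vector_space sV"
    and vanish: "\<forall>n m. M1 \<le> n \<or> M2 \<le> m \<longrightarrow> YW h n (YW h' m v) = 0"
  shows "finite {n. shifted_prod_term sV YW h h' v p q n \<noteq> 0}"
proof -
  interpret V: vector_space sV by fact
  have "n < M1 \<and> - n - p - q - 2 < M2" if "YW h n (YW h' (- n - p - q - 2) v) \<noteq> 0" for n
    using vanish that by (meson not_le)
  then have "{n. shifted_prod_term sV YW h h' v p q n \<noteq> 0} \<subseteq> {- p - q - 1 - M2 ..< M1}"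
    by (force simp: shifted_prod_term_def split: if_splits)
  then show ?thesis
    by (rule finite_subset) simp
qed

lemma module_hom_vanishes_on_combination:
  assumes "module_hom s t g" and "\<forall>(w, f)\<in>set ps. g w = 0"
  shows "g (\<Sum>(w, f)\<leftarrow>ps. s (f k) w) = 0"
proof -
  interpret g: module_hom s t g by fact
  show ?thesis
    using assms(2) by (induction ps) (auto simp: g.add g.scale)
qed

text \<open>The module-algebra axiom \<open>Y(h',x)v \<in> V \<otimes> \<complex>((x))\<close> makes the truncation of \<open>Y(h,x)\<close> uniform
  over all coefficients of \<open>Y(h',x)v\<close>.\<close>

lemma module_algebra_action_vanishing:
  fixes YH :: "'h::ab_group_add \<Rightarrow> int \<Rightarrow> 'v::ab_group_add \<Rightarrow> 'v"
  assumes "module_algebra sH YH1 oneH Delta eps sV YV oneV YH"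
  obtains M1 M2 where "\<forall>n m. M1 \<le> n \<or> M2 \<le> m \<longrightarrow> YH h n (YH h' m v) = 0"
proof -
  have W: "nonlocal_va_module sH YH1 oneH sV YH"
    using assms unfolding module_algebra_def by simp
  have "\<forall>h v. \<exists>ps :: ('v \<times> (int \<Rightarrow> complex)) list. (\<forall>(w, f)\<in>set ps. \<exists>N. \<forall>k<N. f k = 0) \<and>
        (\<forall>n. YH h n v = (\<Sum>(w, f)\<leftarrow>ps. sV (f (- n - 1)) w))"
    using assms unfolding module_algebra_def by simp
  then obtain ps :: "('v \<times> (int \<Rightarrow> complex)) list"
    where ps: "\<forall>n. YH h' n v = (\<Sum>(w, f)\<leftarrow>ps. sV (f (- n - 1)) w)"
    by meson
  have trunc: "truncated YH" and bil: "bilinear_modes sH sV YH"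
    using W unfolding nonlocal_va_module_def by simp_all
  have lin: "module_hom sV sV (YH h n)" for n
    using bil unfolding bilinear_modes_def module_hom_iff_linear by blast
  obtain M2 where M2: "\<forall>m\<ge>M2. YH h' m v = 0"
    using trunc unfolding truncated_def by blast
  have "\<forall>w\<in>fst ` set ps. eventually (\<lambda>n. YH h n w = 0) at_top"
    using trunc unfolding truncated_def eventually_at_top_linorder by blast
  then have "eventually (\<lambda>n. \<forall>w\<in>fst ` set ps. YH h n w = 0) at_top"
    by (simp add: eventually_ball_finite)
  then obtain M1 where M1: "\<forall>n\<ge>M1. \<forall>w\<in>fst ` set ps. YH h n w = 0"
    unfolding eventually_at_top_linorder by blast
  have "YH h n (YH h' m v) = 0" if "M1 \<le> n" for n m
  proof -
    have "\<forall>(w, f)\<in>set ps. YH h n w = 0"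
      using M1 that by fastforce
    then show ?thesis
      unfolding ps[rule_format] by (rule module_hom_vanishes_on_combination[OF lin])
  qed
  moreover have "YH h n (YH h' m v) = 0" if "M2 \<le> m" for n m
    using M2 that module_hom.zero[OF lin] by simp
  ultimately show ?thesis
    using that by blast
qed

theorem lemma4p1:
  fixes sH :: "complex \<Rightarrow> 'h::ab_group_add \<Rightarrow> 'h"
    and YH1 :: "'h \<Rightarrow> int \<Rightarrow> 'h \<Rightarrow> 'h" and oneH :: 'h
    and Delta :: "'h \<Rightarrow> ('h \<times> 'h) list" and eps :: "'h \<Rightarrow> complex"
    and sV :: "complex \<Rightarrow> 'v::ab_group_add \<Rightarrow> 'v"
    and YV :: "'v \<Rightarrow> int \<Rightarrow> 'v \<Rightarrow> 'v" and oneV :: 'v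
    and YH :: "'h \<Rightarrow> int \<Rightarrow> 'v \<Rightarrow> 'v"
  assumes "nonlocal_vertex_bialgebra sH YH1 oneH Delta eps"
    and "module_algebra sH YH1 oneH Delta eps sV YV oneV YH"
  shows "\<forall>h h' v p q.
           finite {n. shifted_prod_term sV YH h h' v p q n \<noteq> 0} \<and>
           shifted_prod_coeff sV YH h h' v p q = YH (YH1 h (- p - 1) h') (- q - 1) v"
proof (intro allI)
  fix h h' v p q
  have H: "nonlocal_va sH YH1 oneH"
    using assms(1) unfolding nonlocal_vertex_bialgebra_def by blast
  have W: "nonlocal_va_module sH YH1 oneH sV YH"
    using assms(2) unfolding module_algebra_def by blast
  then have "vector_space sV"
    unfolding nonlocal_va_module_def by blast
  obtain M1 M2 where vanish: "\<forall>n m. M1 \<le> n \<or> M2 \<le> m \<longrightarrow> YH h n (YH h' m v) = 0"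
    using module_algebra_action_vanishing[OF assms(2)] by blast
  show "finite {n. shifted_prod_term sV YH h h' v p q n \<noteq> 0} \<and>
        shifted_prod_coeff sV YH h h' v p q = YH (YH1 h (- p - 1) h') (- q - 1) v"
    using finite_shifted_prod_term_support[OF \<open>vector_space sV\<close> vanish]
      shifted_prod_coeff_eq_iter_coeff[OF H W vanish]
    by (simp add: iter_coeff_def)
qed

end
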